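(* Let $G$ be a finite graph with vertex set $V$ and edge set $E$, and fix enumerations of its vertices and edges as described in the context (with associated circuits $S_G,T_G$ and $\mathtt{MATCH}_{X^V}$). Then there is a pseudofunctor $\mathcal{F}(G)\to\mathbf{Bkp}$ sending each object of $\mathcal{F}(G)$ to $X^V$ and each generating morphism (edge) $e$ of $\mathcal{F}(G)$ to the morphism $$(\mathrm{id}_{X^V}\otimes e);(\mathrm{id}_{X^V}\otimes \mathtt{COPY}_{X^E});(\mathrm{id}_{X^V}\otimes S_G\otimes T_G);(\mathtt{MATCH}_{X^V}\otimes \mathrm{id}_{X^V}),$$ where $e$ here denotes the constant circuit $X^0\to X^E$ outputting the enumeration of the edge $e$. (The image of $\mathcal{F}(G)$ under this pseudofunctor is called $\mathbf{Bpath}(G)$.)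
   Context: Boolean circuits: fix a functionally complete set of gates containing $\mathtt{NAND}$ (2 inputs, 1 output), $\mathtt{COPY}$ (1 input, 2 outputs, duplicating its input), and constants $\top,\bot$ (0 inputs, 1 output). $\mathbf{Bcirc}$ is the free symmetric strict monoidal category generated by one object $X$ and one morphism $X^n\to X^m$ per gate with $n$ inputs and $m$ outputs; $X^n$ is the $n$-fold monoidal product, $X^0$ the unit. $\mathtt{ext}:\mathbf{Bcirc}\to\mathbf{Bfun}$ is the strict monoidal functor to the category of boolean functions $\{0,1\}^n\to\{0,1\}^m$ sending each gate to the function it computes. $\mathtt{AND}$ denotes a fixed circuit $X\otimes X\to X$ computing conjunction, $\mathtt{COPY}_{X^k}:X^k\to X^k\otimes X^k$ a circuit duplicating $k$ wires, and composition is written diagrammatically ($f;g$ means first $f$ then $g$). The bicategory $\mathbf{Bkp}$: objects are those of $\mathbf{Bcirc}$; 1-cells $A\to B$ are morphisms $A\otimes X^n\to X\otimes B$ of $\mathbf{Bcirc}$ for any $n\in\mathbb{N}$; the identity on $A$ is $\top\otimes\mathrm{id}_A: A\otimes X^0\to X\otimes A$; for $f:A\otimes X^{n_0}\to X\otimes B$ and $g:B\otimes X^{n_1}\to X\otimes C$, the composite $f;g$ is $(f\otimes \mathrm{id}_{X^{n_1}});(\mathrm{id}_X\otimes g);(\mathtt{AND}\otimes\mathrm{id}_C)$; between 1-cells $f,g:A\to B$ there is exactly one 2-cell if $\mathtt{ext}f=\mathtt{ext}g$ and none otherwise, with the evident trivial 2-cell compositions and identities. Enumerations: let $X^V$ denote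 $X^{\lceil\log_2(|V|+1)\rceil}$ and $X^E$ denote $X^{\lceil\log_2(|E|+|V|)\rceil}$ (similarly $\{0,1\}^V$, $\{0,1\}^E$). Vertices are injectively enumerated by bitstrings in $\{0,1\}^V$ different from the all-zero string $\mathbf{0}$ (which means "undefined"). The first $|V|$ bitstrings of $\{0,1\}^E$ are reserved to enumerate the identity paths $\mathrm{id}_v$, $v\in V$, and the edges of $E$ are injectively enumerated by other bitstrings of $\{0,1\}^E$; remaining bitstrings are unassigned. The source function $\{0,1\}^E\to\{0,1\}^V$ sends the code of $\mathrm{id}_v$ to the code of $v$, the code of an edge to the code of its source vertex, and any unassigned code to $\mathbf{0}$; the target function is analogous with target vertices. $S_G,T_G:X^E\to X^V$ are circuits implementing the source and target functions. $\mathtt{MATCH}_{X^V}:X^V\otimes X^V\to X$ is a circuit implementing the function $(x,y)\mapsto 1$ if $x=y$ and $x,y\neq\mathbf{0}$, and $0$ otherwise. $\mathcal{F}(G)$ is the free category on the graph $G$: objects are vertices, morphisms are finite paths of edges, identities are the empty paths. *)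

theory Defs
  imports Main "Graph_Theory.Digraph" "Graph_Theory.Arc_Walk"
begin

text \<open>Objects X^n are identified with n :: nat. Morphisms are represented by
well-formed circuit terms (representatives of morphisms of the free SMC).\<close>

datatype gate = NAND | COPY | TOP | BOT

fun gate_in :: "gate \<Rightarrow> nat" where
  "gate_in NAND = 2" | "gate_in COPY = 1" | "gate_in TOP = 0" | "gate_in BOT = 0"

fun gate_out :: "gate \<Rightarrow> nat" where
  "gate_out NAND = 1" | "gate_out COPY = 2" | "gate_out TOP = 1" | "gate_out BOT = 1"

fun gate_fun :: "gate \<Rightarrow> bool list \<Rightarrow> bool list" where
  "gate_fun NAND xs = [\<not> (xs ! 0 \<and> xs ! 1)]"
| "gate_fun COPY xs = [xs ! 0, xs ! 0]"
| "gate_fun TOP xs = [True]"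
| "gate_fun BOT xs = [False]"

datatype circ =
    Gate gate
  | Id nat
  | Swap nat nat
  | Comp circ circ    \<comment> \<open>diagrammatic composition: Comp f g = f;g\<close>
  | Tens circ circ

fun cdom :: "circ \<Rightarrow> nat" where
  "cdom (Gate g) = gate_in g"
| "cdom (Id n) = n"
| "cdom (Swap m n) = m + n"
| "cdom (Comp f g) = cdom f"
| "cdom (Tens f g) = cdom f + cdom g"

fun ccod :: "circ \<Rightarrow> nat" where
  "ccod (Gate g) = gate_out g"
| "ccod (Id n) = n"
| "ccod (Swap m n) = n + m"
| "ccod (Comp f g) = ccod g"
| "ccod (Tens f g) = ccod f + ccod g"

fun cwf :: "circ \<Rightarrow> bool" where
  "cwf (Gate g) = True"
| "cwf (Id n) = True"
| "cwf (Swap m n) = True"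
| "cwf (Comp f g) = (cwf f \<and> cwf g \<and> ccod f = cdom g)"
| "cwf (Tens f g) = (cwf f \<and> cwf g)"

definition typed :: "circ \<Rightarrow> nat \<Rightarrow> nat \<Rightarrow> bool" where
  "typed c m n \<longleftrightarrow> cwf c \<and> cdom c = m \<and> ccod c = n"

text \<open>The functor ext : Bcirc \<rightarrow> Bfun (meaningful on inputs of length cdom c).\<close>
fun ext :: "circ \<Rightarrow> bool list \<Rightarrow> bool list" where
  "ext (Gate g) xs = gate_fun g xs"
| "ext (Id n) xs = xs"
| "ext (Swap m n) xs = drop m xs @ take m xs"
| "ext (Comp f g) xs = ext g (ext f xs)"
| "ext (Tens f g) xs = ext f (take (cdom f) xs) @ ext g (drop (cdom f) xs)"

definition same_fun :: "circ \<Rightarrow> circ \<Rightarrow> bool" where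
  "same_fun f g \<longleftrightarrow> cdom f = cdom g \<and> ccod f = ccod g \<and>
     (\<forall>xs. length xs = cdom f \<longrightarrow> ext f xs = ext g xs)"

fun const_circ :: "bool list \<Rightarrow> circ" where
  "const_circ [] = Id 0"
| "const_circ (b # bs) = Tens (Gate (if b then TOP else BOT)) (const_circ bs)"

text \<open>1-cells A \<rightarrow> B: morphisms A \<otimes> X^n \<rightarrow> X \<otimes> B for some n.\<close>
definition bkp_hom :: "nat \<Rightarrow> nat \<Rightarrow> circ \<Rightarrow> bool" where
  "bkp_hom A B f \<longleftrightarrow> cwf f \<and> A \<le> cdom f \<and> ccod f = Suc B"

definition bkp_id :: "nat \<Rightarrow> circ" where
  "bkp_id A = Tens (Gate TOP) (Id A)"

text \<open>For f : A \<otimes> X^n0 \<rightarrow> X \<otimes> B and g : B \<otimes> X^n1 \<rightarrow> X \<otimes> C: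
  (f \<otimes> id_{X^n1}) ; (id_X \<otimes> g) ; (AND \<otimes> id_C).\<close>
definition bkp_comp :: "circ \<Rightarrow> nat \<Rightarrow> nat \<Rightarrow> nat \<Rightarrow> circ \<Rightarrow> circ \<Rightarrow> circ" where
  "bkp_comp AND A B C f g =
     Comp (Comp (Tens f (Id (cdom g - B))) (Tens (Id 1) g)) (Tens AND (Id C))"

text \<open>There is a (unique, necessarily invertible) 2-cell f \<Rightarrow> g between parallel
  1-cells iff they have the same extension.\<close>
definition bkp_2cell :: "circ \<Rightarrow> circ \<Rightarrow> bool" where
  "bkp_2cell f g \<longleftrightarrow> same_fun f g"

text \<open>Morphisms u \<rightarrow> v of F(G) are arc walks (u, p, v); identities are empty walks,
  composition is concatenation. F(G) is regarded as a locally discrete bicategory.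
  Since Bkp has at most one 2-cell between any two 1-cells, a pseudofunctor amounts to
  an object map P0, a map P1 on morphisms landing in the right hom-categories, and the
  existence of the (invertible) unit and composition 2-cells; all coherence and
  naturality axioms hold automatically.\<close>
definition pseudofunctor_FG ::
  "circ \<Rightarrow> ('v, 'e) pre_digraph \<Rightarrow> ('v \<Rightarrow> nat) \<Rightarrow> ('v \<Rightarrow> 'e list \<Rightarrow> 'v \<Rightarrow> circ) \<Rightarrow> bool" where
  "pseudofunctor_FG AND G P0 P1 \<longleftrightarrow>
     (\<forall>u p v. pre_digraph.awalk G u p v \<longrightarrow> bkp_hom (P0 u) (P0 v) (P1 u p v)) \<and>
     (\<forall>u\<in>verts G. bkp_2cell (bkp_id (P0 u)) (P1 u [] u) \<and> bkp_2cell (P1 u [] u) (bkp_id (P0 u))) \<and>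
     (\<forall>u p v q w. pre_digraph.awalk G u p v \<and> pre_digraph.awalk G v q w \<longrightarrow>
        bkp_2cell (bkp_comp AND (P0 u) (P0 v) (P0 w) (P1 u p v) (P1 v q w)) (P1 u (p @ q) w) \<and>
        bkp_2cell (P1 u (p @ q) w) (bkp_comp AND (P0 u) (P0 v) (P0 w) (P1 u p v) (P1 v q w)))"

definition clog2 :: "nat \<Rightarrow> nat" where
  "clog2 n = (LEAST k. n \<le> 2 ^ k)"

text \<open>Big-endian k-bit representation of a natural number; the "first N bitstrings"
  of {0,1}^k are those of 0, ..., N-1.\<close>
definition nat_bits :: "nat \<Rightarrow> nat \<Rightarrow> bool list" where
  "nat_bits k i = map (\<lambda>j. odd (i div 2 ^ (k - 1 - j))) [0..<k]"

definition bits :: "nat \<Rightarrow> bool list set" where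
  "bits k = {xs. length xs = k}"

definition src_fun ::
  "('v, 'e) pre_digraph \<Rightarrow> nat \<Rightarrow> ('v \<Rightarrow> bool list) \<Rightarrow> ('v \<Rightarrow> bool list) \<Rightarrow> ('e \<Rightarrow> bool list)
   \<Rightarrow> ('e \<Rightarrow> 'v) \<Rightarrow> bool list \<Rightarrow> bool list" where
  "src_fun G kV vcode idcode ecode endp x =
     (if \<exists>v\<in>verts G. idcode v = x then vcode (THE v. v \<in> verts G \<and> idcode v = x)
      else if \<exists>e\<in>arcs G. ecode e = x then vcode (endp (THE e. e \<in> arcs G \<and> ecode e = x))
      else replicate kV False)"

end

theory Submission
  imports Defs
begin

text \<open>A walk from u to v is sent to a circuit which, on input x, outputs the bit
  [x = code u] followed by code v. An arc circuit has this shape: MATCH compares the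
  input with the source code computed by S, and T emits the target code. Composition
  in Bkp conjoins the two check bits, and the second check receives the code of the
  middle vertex and therefore succeeds; so the composite of circuits for walks u to v
  and v to w has the shape for (u, w), just like the circuit of the concatenated walk.
  As 2-cells of Bkp are mere equalities of extensions, this provides all structure
  2-cells, and their coherence is automatic.\<close>

lemma length_ext:
  "cwf c \<Longrightarrow> length xs = cdom c \<Longrightarrow> length (ext c xs) = ccod c"
proof (induction c arbitrary: xs)
  case (Gate g) then show ?case by (cases g) auto
qed auto

lemma typed_const_circ: "typed (const_circ bs) 0 (length bs)"
  by (induction bs) (auto simp: typed_def)

lemma ext_const_circ: "ext (const_circ bs) [] = bs"
  by (induction bs) auto

lemma same_fun_commute: "same_fun f g \<longleftrightarrow> same_fun g f"
  by (auto simp: same_fun_def)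

lemma typed_bkp_id: "typed (bkp_id A) A (Suc A)"
  by (simp add: typed_def bkp_id_def)

lemma ext_bkp_id: "ext (bkp_id A) xs = True # xs"
  by (simp add: bkp_id_def)

locale and_gate =
  fixes AND :: circ
  assumes typed_AND: "typed AND 2 1"
    and ext_AND: "ext AND [a, b] = [a \<and> b]"
begin

lemma typed_bkp_comp:
  "typed f A (Suc B) \<Longrightarrow> typed g B (Suc C) \<Longrightarrow> typed (bkp_comp AND A B C f g) A (Suc C)"
  using typed_AND by (auto simp: typed_def bkp_comp_def)

lemma ext_bkp_comp:
  assumes "typed f A (Suc B)" "typed g B (Suc C)" "length xs = A"
    and "ext f xs = a # ys" "ext g ys = b # zs"
  shows "ext (bkp_comp AND A B C f g) xs = (a \<and> b) # zs"
  using assms typed_AND ext_AND by (simp add: typed_def bkp_comp_def)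

lemma ext_Cons_obtain:
  assumes "typed f A (Suc B)" "length xs = A"
  obtains a ys where "ext f xs = a # ys" "length ys = B"
  using length_ext[of f xs] assms by (cases "ext f xs") (auto simp: typed_def)

lemma bkp_comp_id_left:
  assumes g: "typed g A (Suc B)"
  shows "same_fun (bkp_comp AND A A B (bkp_id A) g) g"
proof -
  have "ext (bkp_comp AND A A B (bkp_id A) g) xs = ext g xs" if xs: "length xs = A" for xs
  proof -
    obtain b zs where "ext g xs = b # zs"
      using ext_Cons_obtain[OF g xs] by blast
    then show ?thesis
      using ext_bkp_comp[OF typed_bkp_id g xs ext_bkp_id] by simp
  qed
  with typed_bkp_comp[OF typed_bkp_id g] g show ?thesis
    by (simp add: same_fun_def typed_def)
qed

lemma bkp_comp_id_right:
  assumes f: "typed f A (Suc B)"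
  shows "same_fun (bkp_comp AND A B B f (bkp_id B)) f"
proof -
  have "ext (bkp_comp AND A B B f (bkp_id B)) xs = ext f xs" if xs: "length xs = A" for xs
  proof -
    obtain a ys where "ext f xs = a # ys"
      using ext_Cons_obtain[OF f xs] by blast
    then show ?thesis
      using ext_bkp_comp[OF f typed_bkp_id xs _ ext_bkp_id] by simp
  qed
  with typed_bkp_comp[OF f typed_bkp_id] f show ?thesis
    by (simp add: same_fun_def typed_def)
qed

end

definition guarded_transition :: "circ \<Rightarrow> nat \<Rightarrow> bool list \<Rightarrow> bool list \<Rightarrow> bool" where
  "guarded_transition c k x y \<longleftrightarrow>
     typed c k (Suc k) \<and> (\<forall>xs. length xs = k \<longrightarrow> ext c xs = (xs = x) # y)"

lemma guarded_transition_length: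
  assumes "guarded_transition c k x y"
  shows "length y = k"
proof -
  have "length ((replicate k False = x) # y) = Suc k"
    using assms length_ext[of c "replicate k False"] by (simp add: guarded_transition_def typed_def)
  then show ?thesis by simp
qed

lemma guarded_transition_same_fun:
  "guarded_transition f k x y \<Longrightarrow> guarded_transition g k x y \<Longrightarrow> same_fun f g"
  by (simp add: guarded_transition_def typed_def same_fun_def)

lemma (in and_gate) guarded_transition_bkp_comp:
  assumes f: "guarded_transition f k x y" and g: "guarded_transition g k y z"
  shows "guarded_transition (bkp_comp AND k k k f g) k x z"
proof -
  have "ext (bkp_comp AND k k k f g) xs = (xs = x) # z" if "length xs = k" for xs
    using ext_bkp_comp[of f k k g k xs] f g that guarded_transition_length[OF f]
    by (simp add: guarded_transition_def)
  with f g typed_bkp_comp show ?thesis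
    by (simp add: guarded_transition_def)
qed

text \<open>The singleton equation makes an arc go to its arc circuit itself, as the theorem
  demands, rather than to the composite of that circuit with an identity.\<close>
fun walk_circ :: "circ \<Rightarrow> nat \<Rightarrow> ('e \<Rightarrow> circ) \<Rightarrow> 'e list \<Rightarrow> circ" where
  "walk_circ AND k E [] = bkp_id k"
| "walk_circ AND k E [e] = E e"
| "walk_circ AND k E (e # e' # p) = bkp_comp AND k k k (E e) (walk_circ AND k E (e' # p))"

locale circuit_walks = wf_digraph G + and_gate AND
  for G :: "('v, 'e) pre_digraph" and AND +
  fixes k :: nat and code :: "'v \<Rightarrow> bool list" and E :: "'e \<Rightarrow> circ"
  assumes guarded_transition_arc:
    "e \<in> arcs G \<Longrightarrow> guarded_transition (E e) k (code (tail G e)) (code (head G e))"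
begin

lemma guarded_transition_walk_circ:
  "awalk u p v \<Longrightarrow> p \<noteq> [] \<Longrightarrow> guarded_transition (walk_circ AND k E p) k (code u) (code v)"
proof (induction p arbitrary: u)
  case Nil
  then show ?case by simp
next
  case (Cons e p)
  note IH = Cons.IH
  from Cons.prems have e: "e \<in> arcs G" "u = tail G e" and p: "awalk (head G e) p v"
    by (auto simp: awalk_Cons_iff)
  have arc: "guarded_transition (E e) k (code u) (code (head G e))"
    using guarded_transition_arc[OF e(1)] e(2) by simp
  show ?case
  proof (cases p)
    case Nil
    then show ?thesis using arc p by (simp add: awalk_Nil_iff)
  next
    case (Cons e' p')
    then show ?thesis
      using guarded_transition_bkp_comp[OF arc IH[OF p]] by simp
  qed
qed

lemma typed_walk_circ: "awalk u p v \<Longrightarrow> typed (walk_circ AND k E p) k (Suc k)"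
  using guarded_transition_walk_circ[of u p v] typed_bkp_id
  by (cases "p = []") (auto simp: guarded_transition_def)

lemma walk_circ_append:
  assumes p: "awalk u p v" and q: "awalk v q w"
  shows "same_fun (bkp_comp AND k k k (walk_circ AND k E p) (walk_circ AND k E q))
                  (walk_circ AND k E (p @ q))"
proof -
  consider "p = []" | "q = []" | "p \<noteq> []" "q \<noteq> []" by blast
  then show ?thesis
  proof cases
    case 1
    then show ?thesis using bkp_comp_id_left typed_walk_circ[OF q] by simp
  next
    case 2
    then show ?thesis using bkp_comp_id_right typed_walk_circ[OF p] by simp
  next
    case 3
    then show ?thesis
      using guarded_transition_same_fun guarded_transition_bkp_comp
        guarded_transition_walk_circ[OF p] guarded_transition_walk_circ[OF q]
        guarded_transition_walk_circ[OF awalk_appendI[OF p q]]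
      by blast
  qed
qed

theorem pseudofunctor_walk_circ:
  "pseudofunctor_FG AND G (\<lambda>_. k) (\<lambda>u p v. walk_circ AND k E p)"
  unfolding pseudofunctor_FG_def bkp_2cell_def
proof (intro conjI allI ballI impI)
  fix u p v
  assume "awalk u p v"
  then show "bkp_hom k k (walk_circ AND k E p)"
    using typed_walk_circ by (simp add: bkp_hom_def typed_def)
next
  fix u
  show "same_fun (bkp_id k) (walk_circ AND k E [])" "same_fun (walk_circ AND k E []) (bkp_id k)"
    by (simp_all add: same_fun_def)
next
  fix u p v q w
  assume "awalk u p v \<and> awalk v q w"
  then show "same_fun (bkp_comp AND k k k (walk_circ AND k E p) (walk_circ AND k E q))
                      (walk_circ AND k E (p @ q))"
    and "same_fun (walk_circ AND k E (p @ q))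
                  (bkp_comp AND k k k (walk_circ AND k E p) (walk_circ AND k E q))"
    using walk_circ_append same_fun_commute by blast+
qed

end

definition arc_circ :: "nat \<Rightarrow> circ \<Rightarrow> circ \<Rightarrow> circ \<Rightarrow> circ \<Rightarrow> bool list \<Rightarrow> circ" where
  "arc_circ kV COPYE S T MATCH c =
     Comp (Comp (Comp (Tens (Id kV) (const_circ c))
                      (Tens (Id kV) COPYE))
                (Tens (Id kV) (Tens S T)))
          (Tens MATCH (Id kV))"

lemma guarded_transition_arc_circ:
  assumes S: "typed S kE kV" and T: "typed T kE kV"
    and MATCH: "typed MATCH (2 * kV) 1"
       "\<forall>xs. length xs = 2 * kV \<longrightarrow>
          ext MATCH xs = [take kV xs = drop kV xs \<and> take kV xs \<noteq> replicate kV False]"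
    and COPYE: "typed COPYE kE (2 * kE)" "\<forall>xs. length xs = kE \<longrightarrow> ext COPYE xs = xs @ xs"
    and c: "length c = kE" and nonzero: "ext S c \<noteq> replicate kV False"
  shows "guarded_transition (arc_circ kV COPYE S T MATCH c) kV (ext S c) (ext T c)"
proof -
  have len_S: "length (ext S c) = kV"
    using S c length_ext[of S c] by (simp add: typed_def)
  have "ext (arc_circ kV COPYE S T MATCH c) xs = (xs = ext S c) # ext T c"
    if xs: "length xs = kV" for xs
  proof -
    have "ext (arc_circ kV COPYE S T MATCH c) xs
        = ext (Tens MATCH (Id kV)) (xs @ ext S c @ ext T c)"
      using xs c S MATCH COPYE typed_const_circ[of c]
      by (simp add: arc_circ_def ext_const_circ typed_def)
    also have "\<dots> = ext MATCH (xs @ ext S c) @ ext T c"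
      using MATCH xs len_S by (simp add: typed_def)
    also have "\<dots> = (xs = ext S c) # ext T c"
      using MATCH xs len_S nonzero by auto
    finally show ?thesis .
  qed
  with S T MATCH COPYE typed_const_circ[of c] c show ?thesis
    by (simp add: guarded_transition_def arc_circ_def typed_def)
qed

lemma src_fun_arc_code:
  assumes "inj_on ecode (arcs G)" "e \<in> arcs G" "ecode e \<notin> idcode ` verts G"
  shows "src_fun G kV vcode idcode ecode endp (ecode e) = vcode (endp e)"
proof -
  have "\<not> (\<exists>v\<in>verts G. idcode v = ecode e)"
    using assms(3) by (metis image_eqI)
  moreover have "(THE e'. e' \<in> arcs G \<and> ecode e' = ecode e) = e"
    using assms(1,2) by (auto dest: inj_onD)
  ultimately show ?thesis
    using assms(2) by (auto simp: src_fun_def)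
qed

theorem theorem10:
  fixes G :: "('v, 'e) pre_digraph"
    and kV kE :: nat
    and vcode idcode :: "'v \<Rightarrow> bool list"
    and ecode :: "'e \<Rightarrow> bool list"
    and S T MATCH AND COPYE :: circ
  assumes "fin_digraph G"
    and kV_def: "kV = clog2 (card (verts G) + 1)"
    and kE_def: "kE = clog2 (card (arcs G) + card (verts G))"
    and vcode: "inj_on vcode (verts G)" "vcode ` verts G \<subseteq> bits kV - {replicate kV False}"
    and idcode: "bij_betw idcode (verts G) (nat_bits kE ` {..<card (verts G)})"
    and ecode: "inj_on ecode (arcs G)"
       "ecode ` arcs G \<subseteq> bits kE - nat_bits kE ` {..<card (verts G)}"
    and S: "typed S kE kV"
       "\<forall>xs. length xs = kE \<longrightarrow> ext S xs = src_fun G kV vcode idcode ecode (tail G) xs"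
    and T: "typed T kE kV"
       "\<forall>xs. length xs = kE \<longrightarrow> ext T xs = src_fun G kV vcode idcode ecode (head G) xs"
    and MATCH: "typed MATCH (2 * kV) 1"
       "\<forall>xs. length xs = 2 * kV \<longrightarrow>
          ext MATCH xs = [take kV xs = drop kV xs \<and> take kV xs \<noteq> replicate kV False]"
    and AND: "typed AND 2 1" "\<forall>a b. ext AND [a, b] = [a \<and> b]"
    and COPYE: "typed COPYE kE (2 * kE)" "\<forall>xs. length xs = kE \<longrightarrow> ext COPYE xs = xs @ xs"
  shows "\<exists>P1. pseudofunctor_FG AND G (\<lambda>_. kV) P1 \<and>
    (\<forall>e\<in>arcs G. P1 (tail G e) [e] (head G e) =
       Comp (Comp (Comp (Tens (Id kV) (const_circ (ecode e)))
                        (Tens (Id kV) COPYE))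
                  (Tens (Id kV) (Tens S T)))
            (Tens MATCH (Id kV)))"
proof -
  interpret fin_digraph G by fact
  interpret and_gate AND using AND by unfold_locales auto
  let ?E = "\<lambda>e. arc_circ kV COPYE S T MATCH (ecode e)"
  have "guarded_transition (?E e) kV (vcode (tail G e)) (vcode (head G e))" if e: "e \<in> arcs G" for e
  proof -
    have "ecode e \<notin> idcode ` verts G" "length (ecode e) = kE"
      using ecode(2) e bij_betw_imp_surj_on[OF idcode] by (auto simp: bits_def)
    moreover have "vcode (tail G e) \<noteq> replicate kV False"
      using vcode(2) tail_in_verts[OF e] by blast
    ultimately show ?thesis
      using guarded_transition_arc_circ[OF S(1) T(1) MATCH COPYE, of "ecode e"]
        S(2) T(2) src_fun_arc_code[OF ecode(1) e] by simp
  qed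
  then interpret circuit_walks G AND kV vcode ?E
    by unfold_locales
  show ?thesis
    using pseudofunctor_walk_circ by (intro exI[of _ "\<lambda>u p v. walk_circ AND kV ?E p"]) (simp add: arc_circ_def)
qed

end
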